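(* Let $X$ be a BN with full support on the DAG $\mathcal G$ with states $\mathcal A$, $f:\mathcal A\to\mathcal B$ a surjection and $U_v=f(X_v)$, and assume (D3) holds. Then for every vertex $v$ with $depth(v)=1$, all $w,\tilde w\in\mathcal A^{pa(v)}$ with $f(w)=f(\tilde w)$, and all $b\in\mathcal B$, $$\mathbb P(U_v=b\mid X_{pa(v)}=w)=\mathbb P(U_v=b\mid X_{pa(v)}=\tilde w).$$
   Context: $\mathcal G=(V,E)$ is a finite DAG; $pa(v)$ parents; $V_s$ parentless vertices, $V_p=V\setminus V_s$; $depth(v)$ maximal number of edges of a directed path from a vertex of $V_s$ to $v$. A BN on $\mathcal G$ with states $\mathcal A$ (finite) is specified by distributions $\alpha_v$ on $\mathcal A$ for $v\in V_s$ and CPDs $P_v(\cdot\mid a_{pa(v)})$ for $v\in V_p$; law $\prod_{v\in V_s}\alpha_v(x_v)\prod_{v\in V_p}P_v(x_v\mid x_{pa(v)})$; full support: all $x\in\mathcal A^V$ have positive probability. $\mathbb P_{\tilde\alpha}$ is the law with the same CPDs and initial distribution $\tilde\alpha$. $f$ applied coordinatewise. (D3): for every initial distribution $\tilde\alpha$, $(U_v)$ under $\mathbb P_{\tilde\alpha}$ factorises over $\mathcal G$ (law of form $\prod_vq_v(u_v\mid u_{pa(v)})$), and for every $v\in V_p$, $b_v$, $b_{pa(v)}$ the value $\mathbb P_{\tilde\alpha}(U_v=b_v\mid U_{pa(v)}=b_{pa(v)})$ is the same for all $\tilde\alpha$ with $\mathbb P_{\tilde\alpha}(U_{pa(v)}=b_{pa(v)})>0$.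 *)

theory Defs
  imports Complex_Main
begin

definition edges :: "('v \<Rightarrow> 'v set) \<Rightarrow> ('v \<times> 'v) set" where
  "edges pa = {(u, v). u \<in> pa v}"

definition is_dag :: "('v \<Rightarrow> 'v set) \<Rightarrow> bool" where
  "is_dag pa \<longleftrightarrow> acyclic (edges pa)"

definition is_path :: "('v \<Rightarrow> 'v set) \<Rightarrow> 'v list \<Rightarrow> bool" where
  "is_path pa xs \<longleftrightarrow> xs \<noteq> [] \<and> (\<forall>i. Suc i < length xs \<longrightarrow> xs ! i \<in> pa (xs ! Suc i))"

definition depth :: "('v \<Rightarrow> 'v set) \<Rightarrow> 'v \<Rightarrow> nat" where
  "depth pa v = Max {length xs - 1 | xs. is_path pa xs \<and> pa (hd xs) = {} \<and> last xs = v}"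

definition restr :: "'v set \<Rightarrow> ('v \<Rightarrow> 'c) \<Rightarrow> 'v \<Rightarrow> 'c" where
  "restr S x = (\<lambda>u. if u \<in> S then x u else undefined)"

definition is_dist :: "('c::finite \<Rightarrow> real) \<Rightarrow> bool" where
  "is_dist d \<longleftrightarrow> (\<forall>a. 0 \<le> d a) \<and> (\<Sum>a\<in>UNIV. d a) = 1"

definition valid_init :: "('v \<Rightarrow> 'v set) \<Rightarrow> ('v \<Rightarrow> 'a::finite \<Rightarrow> real) \<Rightarrow> bool" where
  "valid_init pa \<alpha> \<longleftrightarrow> (\<forall>v. pa v = {} \<longrightarrow> is_dist (\<alpha> v))"

text \<open>CPDs P v (a_pa(v)) a for the vertices with parents; the parent configuration
  is passed as a restricted function.\<close>
definition valid_cpds :: "('v \<Rightarrow> 'v set) \<Rightarrow> ('v \<Rightarrow> ('v \<Rightarrow> 'a) \<Rightarrow> 'a::finite \<Rightarrow> real) \<Rightarrow> bool" where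
  "valid_cpds pa P \<longleftrightarrow> (\<forall>v. pa v \<noteq> {} \<longrightarrow> (\<forall>w. is_dist (P v (restr (pa v) w))))"

definition bn_law :: "('v::finite \<Rightarrow> 'v set) \<Rightarrow> ('v \<Rightarrow> 'a \<Rightarrow> real) \<Rightarrow> ('v \<Rightarrow> ('v \<Rightarrow> 'a) \<Rightarrow> 'a \<Rightarrow> real)
    \<Rightarrow> ('v \<Rightarrow> 'a) \<Rightarrow> real" where
  "bn_law pa \<alpha> P x = (\<Prod>v\<in>{v. pa v = {}}. \<alpha> v (x v)) * (\<Prod>v\<in>{v. pa v \<noteq> {}}. P v (restr (pa v) x) (x v))"

definition bn_prob :: "('v::finite \<Rightarrow> 'v set) \<Rightarrow> ('v \<Rightarrow> 'a::finite \<Rightarrow> real) \<Rightarrow> ('v \<Rightarrow> ('v \<Rightarrow> 'a) \<Rightarrow> 'a \<Rightarrow> real)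
    \<Rightarrow> (('v \<Rightarrow> 'a) \<Rightarrow> bool) \<Rightarrow> real" where
  "bn_prob pa \<alpha> P E = (\<Sum>x\<in>{x. E x}. bn_law pa \<alpha> P x)"

definition bn_cond :: "('v::finite \<Rightarrow> 'v set) \<Rightarrow> ('v \<Rightarrow> 'a::finite \<Rightarrow> real) \<Rightarrow> ('v \<Rightarrow> ('v \<Rightarrow> 'a) \<Rightarrow> 'a \<Rightarrow> real)
    \<Rightarrow> (('v \<Rightarrow> 'a) \<Rightarrow> bool) \<Rightarrow> (('v \<Rightarrow> 'a) \<Rightarrow> bool) \<Rightarrow> real" where
  "bn_cond pa \<alpha> P E F = bn_prob pa \<alpha> P (\<lambda>x. E x \<and> F x) / bn_prob pa \<alpha> P F"

definition full_support :: "('v::finite \<Rightarrow> 'v set) \<Rightarrow> ('v \<Rightarrow> 'a::finite \<Rightarrow> real) \<Rightarrow> ('v \<Rightarrow> ('v \<Rightarrow> 'a) \<Rightarrow> 'a \<Rightarrow> real) \<Rightarrow> bool" where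
  "full_support pa \<alpha> P \<longleftrightarrow> (\<forall>x. 0 < bn_law pa \<alpha> P x)"

definition D3 :: "('v::finite \<Rightarrow> 'v set) \<Rightarrow> ('v \<Rightarrow> ('v \<Rightarrow> 'a) \<Rightarrow> 'a::finite \<Rightarrow> real) \<Rightarrow> ('a \<Rightarrow> 'b::finite) \<Rightarrow> bool" where
  "D3 pa P f \<longleftrightarrow>
     (\<forall>\<alpha>'. valid_init pa \<alpha>' \<longrightarrow>
        (\<exists>q :: 'v \<Rightarrow> ('v \<Rightarrow> 'b) \<Rightarrow> 'b \<Rightarrow> real.
           (\<forall>v c. is_dist (q v (restr (pa v) c))) \<and>
           (\<forall>u :: 'v \<Rightarrow> 'b. bn_prob pa \<alpha>' P (\<lambda>x. (f \<circ> x) = u)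
                = (\<Prod>v\<in>UNIV. q v (restr (pa v) u) (u v))))) \<and>
     (\<forall>v. pa v \<noteq> {} \<longrightarrow> (\<forall>b :: 'b. \<forall>c :: 'v \<Rightarrow> 'b. \<forall>\<alpha>1 \<alpha>2.
        valid_init pa \<alpha>1 \<longrightarrow> valid_init pa \<alpha>2 \<longrightarrow>
        0 < bn_prob pa \<alpha>1 P (\<lambda>x. \<forall>u\<in>pa v. f (x u) = c u) \<longrightarrow>
        0 < bn_prob pa \<alpha>2 P (\<lambda>x. \<forall>u\<in>pa v. f (x u) = c u) \<longrightarrow>
        bn_cond pa \<alpha>1 P (\<lambda>x. f (x v) = b) (\<lambda>x. \<forall>u\<in>pa v. f (x u) = c u)
        = bn_cond pa \<alpha>2 P (\<lambda>x. f (x v) = b) (\<lambda>x. \<forall>u\<in>pa v. f (x u) = c u)))"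

end

theory Submission imports Defs begin

text \<open>The parents of a vertex v of depth 1 are parentless, so their states are drawn from the
  initial distribution alone. Replacing that distribution on pa(v) by the point mass at w
  turns the law conditioned on X_pa(v) = w into the unconditioned law of the modified network,
  under which U_pa(v) = f(w) holds almost surely. Hence P(U_v = b | X_pa(v) = w) is the (D3)
  conditional P(U_v = b | U_pa(v) = f(w)) for a suitable initial distribution, and by (D3) this
  value does not depend on the initial distribution, so w and w' give the same value.\<close>

lemma is_path_trancl:
  assumes "is_path pa xs" "j < length xs" "i < j"
  shows "(xs ! i, xs ! j) \<in> (edges pa)\<^sup>+"
  using assms(2,3)
proof (induction j)
  case 0
  then show ?case by simp
next
  case (Suc j)
  have edge: "(xs ! j, xs ! Suc j) \<in> edges pa"
    using assms(1) Suc.prems by (auto simp: is_path_def edges_def)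
  show ?case
  proof (cases "i = j")
    case True
    then show ?thesis using edge by auto
  next
    case False
    then have "(xs ! i, xs ! j) \<in> (edges pa)\<^sup>+" using Suc by auto
    then show ?thesis using edge by (meson trancl_into_trancl)
  qed
qed

lemma is_path_distinct:
  assumes "is_dag pa" "is_path pa xs"
  shows "distinct xs"
proof -
  have "xs ! i \<noteq> xs ! j" if "i < j" "j < length xs" for i j
    using is_path_trancl[OF assms(2) that(2,1)] assms(1) by (auto simp: is_dag_def acyclic_def)
  then show ?thesis
    by (metis distinct_conv_nth linorder_neqE_nat)
qed

lemma is_path_length_le_card:
  fixes pa :: "'v::finite \<Rightarrow> 'v set"
  assumes "is_dag pa" "is_path pa xs"
  shows "length xs \<le> card (UNIV :: 'v set)"
  using distinct_card[OF is_path_distinct[OF assms]] card_mono[of UNIV "set xs"] by simp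

lemma is_path_snoc:
  assumes "is_path pa xs" "last xs \<in> pa x"
  shows "is_path pa (xs @ [x])"
  unfolding is_path_def
proof (intro conjI allI impI)
  fix i assume i: "Suc i < length (xs @ [x])"
  show "(xs @ [x]) ! i \<in> pa ((xs @ [x]) ! Suc i)"
  proof (cases "Suc i < length xs")
    case True
    then show ?thesis using assms(1) by (auto simp: is_path_def nth_append)
  next
    case False
    then have "i = length xs - 1" "xs \<noteq> []" using i by auto
    then show ?thesis using assms(2) by (simp add: nth_append last_conv_nth)
  qed
qed simp

lemma exists_root_path:
  fixes pa :: "'v::finite \<Rightarrow> 'v set"
  assumes "is_dag pa"
  shows "\<exists>xs. is_path pa xs \<and> pa (hd xs) = {} \<and> last xs = x"
proof -
  have "wf (edges pa)"
    using assms finite_acyclic_wf[of "edges pa"] by (simp add: is_dag_def)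
  then show ?thesis
  proof (induction x rule: wf_induct_rule)
    case (less x)
    show ?case
    proof (cases "pa x = {}")
      case True
      then show ?thesis by (intro exI[of _ "[x]"]) (auto simp: is_path_def)
    next
      case False
      then obtain y where y: "y \<in> pa x" by auto
      then obtain ys where ys: "is_path pa ys" "pa (hd ys) = {}" "last ys = y"
        using less.IH by (auto simp: edges_def)
      have "is_path pa (ys @ [x])"
        using is_path_snoc[OF ys(1)] ys(3) y by simp
      moreover have "hd (ys @ [x]) = hd ys"
        using ys(1) by (simp add: is_path_def)
      ultimately show ?thesis
        using ys(2) by (intro exI[of _ "ys @ [x]"]) simp
    qed
  qed
qed

lemma path_length_le_depth:
  fixes pa :: "'v::finite \<Rightarrow> 'v set"
  assumes "is_dag pa" "is_path pa xs" "pa (hd xs) = {}" "last xs = v"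
  shows "length xs - 1 \<le> depth pa v"
proof -
  let ?L = "{length xs - 1 | xs. is_path pa xs \<and> pa (hd xs) = {} \<and> last xs = v}"
  have "?L \<subseteq> {..card (UNIV :: 'v set)}"
    using is_path_length_le_card[OF assms(1)] by fastforce
  then have "finite ?L"
    using finite_subset by blast
  then show ?thesis
    unfolding depth_def using assms(2-4) by (intro Max_ge) auto
qed

lemma parents_of_depth_one_are_roots:
  fixes pa :: "'v::finite \<Rightarrow> 'v set"
  assumes "is_dag pa" "depth pa v = 1" "u \<in> pa v"
  shows "pa u = {}"
proof (rule ccontr)
  assume "pa u \<noteq> {}"
  then obtain t where t: "t \<in> pa u" by auto
  obtain ys where ys: "is_path pa ys" "pa (hd ys) = {}" "last ys = t"
    using exists_root_path[OF assms(1)] by blast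
  have "ys \<noteq> []"
    using ys(1) by (simp add: is_path_def)
  have "is_path pa (ys @ [u])"
    using is_path_snoc[OF ys(1)] ys(3) t by simp
  then have "is_path pa (ys @ [u, v])"
    using is_path_snoc[of pa "ys @ [u]" v] assms(3) by simp
  moreover have "hd (ys @ [u, v]) = hd ys"
    using \<open>ys \<noteq> []\<close> by simp
  ultimately have "length (ys @ [u, v]) - 1 \<le> depth pa v"
    using path_length_le_depth[OF assms(1), of "ys @ [u, v]" v] ys(2) by simp
  then show False
    using assms(2) \<open>ys \<noteq> []\<close> by simp
qed

definition clamp_init :: "'v set \<Rightarrow> ('v \<Rightarrow> 'a) \<Rightarrow> ('v \<Rightarrow> 'a \<Rightarrow> real) \<Rightarrow> 'v \<Rightarrow> 'a \<Rightarrow> real" where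
  "clamp_init S w \<alpha> = (\<lambda>u a. if u \<in> S then (if a = w u then 1 else 0) else \<alpha> u a)"

lemma valid_init_clamp_init:
  assumes "valid_init pa \<alpha>"
  shows "valid_init pa (clamp_init S w \<alpha>)"
proof -
  have "is_dist (clamp_init S w \<alpha> v)" if "pa v = {}" for v
    using assms that by (cases "v \<in> S") (auto simp: valid_init_def is_dist_def clamp_init_def)
  then show ?thesis
    by (simp add: valid_init_def)
qed

lemma bn_law_clamp_init:
  fixes pa :: "'v::finite \<Rightarrow> 'v set"
  assumes roots: "\<forall>u\<in>S. pa u = {}"
  shows "bn_law pa (clamp_init S w \<alpha>) P x * (\<Prod>u\<in>S. \<alpha> u (w u))
       = (if \<forall>u\<in>S. x u = w u then bn_law pa \<alpha> P x else 0)"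
proof -
  let ?\<alpha>' = "clamp_init S w \<alpha>"
  let ?R = "{v. pa v = {}}"
  let ?A = "\<Prod>v\<in>?R - S. \<alpha> v (x v)"
  let ?Q = "\<Prod>v\<in>{v. pa v \<noteq> {}}. P v (restr (pa v) x) (x v)"
  have S_R: "S \<subseteq> ?R"
    using roots by auto
  have "(\<Prod>v\<in>?R. ?\<alpha>' v (x v)) = ?A * (\<Prod>v\<in>S. ?\<alpha>' v (x v))"
    using prod.subset_diff[OF S_R, of "\<lambda>v. ?\<alpha>' v (x v)"] by (simp add: clamp_init_def)
  then have law_clamped: "bn_law pa ?\<alpha>' P x = ?A * (\<Prod>v\<in>S. ?\<alpha>' v (x v)) * ?Q"
    by (simp add: bn_law_def)
  have "(\<Prod>v\<in>?R. \<alpha> v (x v)) = ?A * (\<Prod>v\<in>S. \<alpha> v (x v))"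
    by (rule prod.subset_diff[OF S_R]) simp
  then have law: "bn_law pa \<alpha> P x = ?A * (\<Prod>v\<in>S. \<alpha> v (x v)) * ?Q"
    by (simp add: bn_law_def)
  show ?thesis
  proof (cases "\<forall>u\<in>S. x u = w u")
    case True
    then have "(\<Prod>v\<in>S. ?\<alpha>' v (x v)) = 1" "(\<Prod>v\<in>S. \<alpha> v (x v)) = (\<Prod>u\<in>S. \<alpha> u (w u))"
      by (auto simp: clamp_init_def intro: prod.neutral prod.cong)
    then show ?thesis
      unfolding law_clamped law if_P[OF True] by simp
  next
    case False
    then have "(\<Prod>v\<in>S. ?\<alpha>' v (x v)) = 0"
      by (auto simp: clamp_init_def)
    then show ?thesis
      unfolding law_clamped if_not_P[OF False] by simp
  qed
qed

text \<open>The product is the probability of X_S = w under \<alpha>, so the law with clamped roots is the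
  law under \<alpha> conditioned on X_S = w.\<close>

lemma bn_prob_clamp_init:
  fixes pa :: "'v::finite \<Rightarrow> 'v set"
  assumes "\<forall>u\<in>S. pa u = {}"
  shows "bn_prob pa (clamp_init S w \<alpha>) P G * (\<Prod>u\<in>S. \<alpha> u (w u))
       = bn_prob pa \<alpha> P (\<lambda>x. G x \<and> (\<forall>u\<in>S. x u = w u))"
proof -
  have "bn_prob pa (clamp_init S w \<alpha>) P G * (\<Prod>u\<in>S. \<alpha> u (w u))
      = (\<Sum>x\<in>{x. G x}. if \<forall>u\<in>S. x u = w u then bn_law pa \<alpha> P x else 0)"
    unfolding bn_prob_def sum_distrib_right by (intro sum.cong refl bn_law_clamp_init[OF assms])
  also have "\<dots> = bn_prob pa \<alpha> P (\<lambda>x. G x \<and> (\<forall>u\<in>S. x u = w u))"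
    unfolding bn_prob_def by (simp add: sum.inter_filter[symmetric] conj_commute)
  finally show ?thesis .
qed

lemma bn_prob_pos:
  assumes "full_support pa \<alpha> P" "E y"
  shows "0 < bn_prob pa \<alpha> P E"
  unfolding bn_prob_def
  by (rule sum_pos) (use assms in \<open>auto simp: full_support_def\<close>)

lemma init_pos_of_full_support:
  assumes "full_support pa \<alpha> P" "valid_init pa \<alpha>" "pa u = {}"
  shows "0 < \<alpha> u a"
proof -
  have "0 < bn_law pa \<alpha> P (\<lambda>_. a)"
    using assms(1) by (simp add: full_support_def)
  moreover have "bn_law pa \<alpha> P (\<lambda>_. a) = 0" if "\<alpha> u a = 0"
    using assms(3) that by (auto simp: bn_law_def prod_zero_iff)
  ultimately have "\<alpha> u a \<noteq> 0"
    by auto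
  moreover have "0 \<le> \<alpha> u a"
    using assms(2,3) by (simp add: valid_init_def is_dist_def)
  ultimately show ?thesis by simp
qed

lemma bn_cond_clamp_init:
  fixes pa :: "'v::finite \<Rightarrow> 'v set"
  assumes roots: "\<forall>u\<in>S. pa u = {}" and "full_support pa \<alpha> P" "valid_init pa \<alpha>"
    and C: "\<And>x. \<forall>u\<in>S. x u = w u \<Longrightarrow> C x"
  shows "bn_cond pa (clamp_init S w \<alpha>) P E C = bn_cond pa \<alpha> P E (\<lambda>x. \<forall>u\<in>S. x u = w u)"
    and "0 < bn_prob pa (clamp_init S w \<alpha>) P C"
proof -
  let ?K = "\<Prod>u\<in>S. \<alpha> u (w u)"
  have K: "0 < ?K"
    using init_pos_of_full_support[OF assms(2,3)] roots by (simp add: prod_pos)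
  have "(\<lambda>x. (E x \<and> C x) \<and> (\<forall>u\<in>S. x u = w u)) = (\<lambda>x. E x \<and> (\<forall>u\<in>S. x u = w u))"
    using C by auto
  then have num: "bn_prob pa (clamp_init S w \<alpha>) P (\<lambda>x. E x \<and> C x) * ?K
           = bn_prob pa \<alpha> P (\<lambda>x. E x \<and> (\<forall>u\<in>S. x u = w u))"
    using bn_prob_clamp_init[OF roots, of w \<alpha> P "\<lambda>x. E x \<and> C x"] by simp
  have "(\<lambda>x. C x \<and> (\<forall>u\<in>S. x u = w u)) = (\<lambda>x. \<forall>u\<in>S. x u = w u)"
    using C by auto
  then have den: "bn_prob pa (clamp_init S w \<alpha>) P C * ?K = bn_prob pa \<alpha> P (\<lambda>x. \<forall>u\<in>S. x u = w u)"
    using bn_prob_clamp_init[OF roots, of w \<alpha> P C] by simp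
  have "bn_cond pa (clamp_init S w \<alpha>) P E C
      = (bn_prob pa (clamp_init S w \<alpha>) P (\<lambda>x. E x \<and> C x) * ?K) / (bn_prob pa (clamp_init S w \<alpha>) P C * ?K)"
    unfolding bn_cond_def using K by (intro mult_divide_mult_cancel_right[symmetric]) linarith
  then show "bn_cond pa (clamp_init S w \<alpha>) P E C = bn_cond pa \<alpha> P E (\<lambda>x. \<forall>u\<in>S. x u = w u)"
    unfolding num den bn_cond_def .
  have "0 < bn_prob pa \<alpha> P (\<lambda>x. \<forall>u\<in>S. x u = w u)"
    using bn_prob_pos[OF assms(2), of _ w] by simp
  then show "0 < bn_prob pa (clamp_init S w \<alpha>) P C"
    unfolding den[symmetric] using zero_less_mult_pos2[OF _ K] by blast
qed

lemma D3_cond_independent_of_init: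
  assumes "D3 pa P f" "pa v \<noteq> {}" "valid_init pa \<alpha>1" "valid_init pa \<alpha>2"
    and "0 < bn_prob pa \<alpha>1 P (\<lambda>x. \<forall>u\<in>pa v. f (x u) = c u)"
    and "0 < bn_prob pa \<alpha>2 P (\<lambda>x. \<forall>u\<in>pa v. f (x u) = c u)"
  shows "bn_cond pa \<alpha>1 P (\<lambda>x. f (x v) = b) (\<lambda>x. \<forall>u\<in>pa v. f (x u) = c u)
       = bn_cond pa \<alpha>2 P (\<lambda>x. f (x v) = b) (\<lambda>x. \<forall>u\<in>pa v. f (x u) = c u)"
  using assms unfolding D3_def by blast

theorem mainTheorem12:
  fixes pa :: "'v::finite \<Rightarrow> 'v set"
    and \<alpha> :: "'v \<Rightarrow> 'a::finite \<Rightarrow> real"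
    and P :: "'v \<Rightarrow> ('v \<Rightarrow> 'a) \<Rightarrow> 'a \<Rightarrow> real"
    and f :: "'a \<Rightarrow> 'b::finite"
  assumes "is_dag pa"
    and "valid_init pa \<alpha>"
    and "valid_cpds pa P"
    and "full_support pa \<alpha> P"
    and "surj f"
    and "D3 pa P f"
    and "depth pa v = 1"
    and "\<forall>u\<in>pa v. f (w u) = f (w' u)"
  shows "bn_cond pa \<alpha> P (\<lambda>x. f (x v) = b) (\<lambda>x. \<forall>u\<in>pa v. x u = w u)
       = bn_cond pa \<alpha> P (\<lambda>x. f (x v) = b) (\<lambda>x. \<forall>u\<in>pa v. x u = w' u)"
proof (cases "pa v = {}")
  case True
  then show ?thesis by simp
next
  case False
  have roots: "\<forall>u\<in>pa v. pa u = {}"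
    using parents_of_depth_one_are_roots[OF assms(1,7)] by blast
  let ?E = "\<lambda>x. f (x v) = b"
  let ?C = "\<lambda>x. \<forall>u\<in>pa v. f (x u) = f (w u)"
  have C_w: "?C x" if "\<forall>u\<in>pa v. x u = w u" for x
    using that by simp
  have C_w': "?C x" if "\<forall>u\<in>pa v. x u = w' u" for x
    using that assms(8) by simp
  note clamp_w = bn_cond_clamp_init[where C = ?C, OF roots assms(4,2) C_w]
  note clamp_w' = bn_cond_clamp_init[where C = ?C, OF roots assms(4,2) C_w']
  have "bn_cond pa (clamp_init (pa v) w \<alpha>) P ?E ?C = bn_cond pa (clamp_init (pa v) w' \<alpha>) P ?E ?C"
    by (rule D3_cond_independent_of_init[OF assms(6) False
          valid_init_clamp_init[OF assms(2)] valid_init_clamp_init[OF assms(2)] clamp_w(2) clamp_w'(2)])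
  then show ?thesis
    using clamp_w(1) clamp_w'(1) by simp
qed

end
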